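(* Under assumptions (A1)–(A6), for (almost) every $x$, $$P(Y(0)=0\mid Y=1,M=1,A=1,X=x)=\delta(x),$$ $$P(Y(1,M(0))=0,\,Y(0,M(0))=0\mid Y=1,M=1,A=1,X=x)=\psi(x),$$ $$P(Y(1,M(0))=1,\,Y(0,M(0))=0\mid Y=1,M=1,A=1,X=x)=\zeta(x).$$
   Context: Observed data $O=(X,A,M,Y)$ with covariates $X\in\mathbb{R}^d$, binary exposure $A$, binary mediator $M$, binary outcome $Y$. For $a,m\in\{0,1\}$, $Y(a,m)$ is the potential outcome under $A=a,M=m$, $M(a)$ the potential mediator, $Y(a):=Y(a,M(a))$, cross-world $Y(a,M(a'))$ by substitution, all on a common probability space with $O$. $\delta(x)=P(Y(0)=0\mid Y(1)=1,M(1)=1,X=x)$; $\psi(x)=P(Y(1,M(0))=0,\,Y(0,M(0))=0\mid Y(1,M(1))=1,M(1)=1,X=x)$; $\zeta(x)=P(Y(1,M(0))=1,\,Y(0,M(0))=0\mid Y(1,M(1))=1,M(1)=1,X=x)$. Assumptions: (A1) $A=a,M=m\Rightarrow Y=Y(a,m)$ and $A=a\Rightarrow M=M(a)$. (A2) $Y(1,1)\ge Y(1,0)\ge Y(0,0)$, $Y(1,1)\ge Y(0,1)$, $M(1)\ge M(0)$. (A3) $A\perp\{Y(1,1),Y(1,0),Y(0,1),Y(0,0),M(1),M(0)\}\mid X$. (A4) $\{Y(1,1),Y(1,0),Y(0,1),Y(0,0)\}\perp\{M(1),M(0)\}\mid X$. (A5) for some $\epsilon>0$, $P\{\min_{a,m}P(A=a,M=m\mid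 X)\ge\epsilon\}=1$. (A6) $P\{P(Y=1\mid A=1,M=1,X)\ge\epsilon\}=1$. *)

theory Defs
  imports "HOL-Probability.Probability"
begin

definition sigmaX :: "'a measure \<Rightarrow> ('a \<Rightarrow> real^'d) \<Rightarrow> 'a measure" where
  "sigmaX M X = vimage_algebra (space M) X borel"

definition cprob :: "'a measure \<Rightarrow> ('a \<Rightarrow> real^'d) \<Rightarrow> 'a set \<Rightarrow> 'a \<Rightarrow> real" where
  "cprob M X E = real_cond_exp M (sigmaX M X) (indicator E)"

definition cprob_ev :: "'a measure \<Rightarrow> ('a \<Rightarrow> real^'d) \<Rightarrow> 'a set \<Rightarrow> 'a set \<Rightarrow> 'a \<Rightarrow> real" where
  "cprob_ev M X E B = (\<lambda>\<omega>. cprob M X (E \<inter> B) \<omega> / cprob M X B \<omega>)"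

definition ev :: "'a measure \<Rightarrow> ('a \<Rightarrow> bool) \<Rightarrow> 'a set" where
  "ev M P = {\<omega> \<in> space M. P \<omega>}"

text \<open>Conditional independence given X of two discrete (countably-valued) random variables U, V:
  P(U=u, V=v | X) = P(U=u | X) P(V=v | X) almost surely, for all values u, v.\<close>
definition cond_indep :: "'a measure \<Rightarrow> ('a \<Rightarrow> real^'d) \<Rightarrow> ('a \<Rightarrow> 'u) \<Rightarrow> ('a \<Rightarrow> 'v) \<Rightarrow> bool" where
  "cond_indep M X U V \<longleftrightarrow> (\<forall>u v. AE \<omega> in M.
      cprob M X (ev M (\<lambda>w. U w = u \<and> V w = v)) \<omega>
        = cprob M X (ev M (\<lambda>w. U w = u)) \<omega> * cprob M X (ev M (\<lambda>w. V w = v)) \<omega>)"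

end

theory Submission
  imports Defs
begin

text \<open>
  Let \<open>V\<close> be the vector of all potential outcomes and potential mediators. By consistency (A1)
  the observed stratum \<open>{Y = 1, M = 1, A = 1}\<close> is the principal stratum
  \<open>{Y(1,M(1)) = 1, M(1) = 1}\<close> intersected with \<open>{A = 1}\<close>, and both this stratum and the
  cross-world events \<open>{Y(1,M(0)) = i, Y(0,M(0)) = j}\<close> are events about \<open>V\<close>. By exposure
  ignorability (A3), \<open>P(A = 1, V \<in> S | X) = P(A = 1 | X) P(V \<in> S | X)\<close> for every set \<open>S\<close>
  of values of \<open>V\<close>, so the factor \<open>P(A = 1 | X)\<close>, which is positive by (A5), cancels from the
  ratio defining the conditional probability.
\<close>

lemma sigma_finite_subalgebra_sigmaX:
  assumes "prob_space M" "X \<in> borel_measurable M"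
  shows "sigma_finite_subalgebra M (sigmaX M X)"
proof -
  interpret prob_space M by fact
  have "subalgebra M (sigmaX M X)"
    unfolding subalgebra_def sigmaX_def
    using assms(2) by (auto simp: sets_vimage_algebra2 measurable_sets)
  then show ?thesis
    by (intro finite_measure_subalgebra_is_sigma_finite)
      (simp add: finite_measure_subalgebra_def finite_measure_subalgebra_axioms_def finite_measure_axioms)
qed

lemma cprob_mono:
  assumes "prob_space M" "X \<in> borel_measurable M" "E \<in> sets M" "F \<in> sets M" "E \<subseteq> F"
  shows "AE \<omega> in M. cprob M X E \<omega> \<le> cprob M X F \<omega>"
proof -
  interpret prob_space M by fact
  interpret sigma_finite_subalgebra M "sigmaX M X"
    using assms(1,2) by (rule sigma_finite_subalgebra_sigmaX)
  show ?thesis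
    unfolding cprob_def using assms(3-5)
    by (intro real_cond_exp_mono AE_I2) (auto simp: less_top[symmetric] split: split_indicator)
qed

lemma cprob_finite_UNION:
  assumes "prob_space M" "X \<in> borel_measurable M"
    and "finite I" "disjoint_family_on E I" "\<And>i. i \<in> I \<Longrightarrow> E i \<in> sets M"
  shows "AE \<omega> in M. cprob M X (\<Union>i\<in>I. E i) \<omega> = (\<Sum>i\<in>I. cprob M X (E i) \<omega>)"
proof -
  interpret prob_space M by fact
  interpret sigma_finite_subalgebra M "sigmaX M X"
    using assms(1,2) by (rule sigma_finite_subalgebra_sigmaX)
  have "indicator (\<Union>i\<in>I. E i) = (\<lambda>\<omega>. \<Sum>i\<in>I. indicator (E i) \<omega> :: real)"
    using assms(3,4) by (auto simp: indicator_UN_disjoint)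
  \<comment> \<open>\<open>real_cond_exp_sum\<close> needs every summand integrable, so pad the family with \<open>{}\<close> outside \<open>I\<close>.\<close>
  moreover have "integrable M (indicator (if i \<in> I then E i else {}) :: 'a \<Rightarrow> real)" for i
    using assms(5) by (auto intro!: integrable_real_indicator simp: less_top[symmetric])
  ultimately show ?thesis
    unfolding cprob_def
    using real_cond_exp_sum[where f = "\<lambda>i. indicator (if i \<in> I then E i else {})" and I = I]
    by (simp cong: sum.cong)
qed

lemma cond_indep_cprob_mult:
  assumes "prob_space M" "X \<in> borel_measurable M"
    and "cond_indep M X U V" "finite (V ` space M)"
    and "\<And>v. ev M (\<lambda>w. U w = u \<and> V w = v) \<in> sets M" "\<And>v. ev M (\<lambda>w. V w = v) \<in> sets M"
  shows "AE \<omega> in M. cprob M X (ev M (\<lambda>w. U w = u \<and> V w \<in> S)) \<omega>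
    = cprob M X (ev M (\<lambda>w. U w = u)) \<omega> * cprob M X (ev M (\<lambda>w. V w \<in> S)) \<omega>"
proof -
  let ?S = "S \<inter> V ` space M"
  have joint: "ev M (\<lambda>w. U w = u \<and> V w \<in> S) = (\<Union>v\<in>?S. ev M (\<lambda>w. U w = u \<and> V w = v))"
    and marginal: "ev M (\<lambda>w. V w \<in> S) = (\<Union>v\<in>?S. ev M (\<lambda>w. V w = v))"
    by (auto simp: ev_def)
  have "disjoint_family_on (\<lambda>v. ev M (\<lambda>w. U w = u \<and> V w = v)) ?S"
    and "disjoint_family_on (\<lambda>v. ev M (\<lambda>w. V w = v)) ?S"
    by (auto simp: disjoint_family_on_def ev_def)
  then have "AE \<omega> in M. cprob M X (ev M (\<lambda>w. U w = u \<and> V w \<in> S)) \<omega>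
      = (\<Sum>v\<in>?S. cprob M X (ev M (\<lambda>w. U w = u \<and> V w = v)) \<omega>)"
    and "AE \<omega> in M. cprob M X (ev M (\<lambda>w. V w \<in> S)) \<omega>
      = (\<Sum>v\<in>?S. cprob M X (ev M (\<lambda>w. V w = v)) \<omega>)"
    unfolding joint marginal using assms by (auto intro!: cprob_finite_UNION)
  moreover have "AE \<omega> in M. \<forall>v\<in>?S. cprob M X (ev M (\<lambda>w. U w = u \<and> V w = v)) \<omega>
      = cprob M X (ev M (\<lambda>w. U w = u)) \<omega> * cprob M X (ev M (\<lambda>w. V w = v)) \<omega>"
    using assms(3,4) by (auto simp: cond_indep_def AE_finite_all)
  ultimately show ?thesis
    by eventually_elim (simp add: sum_distrib_left)
qed

lemma cprob_ev_cond_indep_cancel: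
  assumes "prob_space M" "X \<in> borel_measurable M"
    and "cond_indep M X U V" "finite (V ` space M)"
    and "\<And>v. ev M (\<lambda>w. U w = u \<and> V w = v) \<in> sets M" "\<And>v. ev M (\<lambda>w. V w = v) \<in> sets M"
    and "AE \<omega> in M. cprob M X (ev M (\<lambda>w. U w = u)) \<omega> > 0"
  shows "AE \<omega> in M. cprob_ev M X (ev M (\<lambda>w. V w \<in> E)) (ev M (\<lambda>w. U w = u \<and> V w \<in> B)) \<omega>
    = cprob_ev M X (ev M (\<lambda>w. V w \<in> E)) (ev M (\<lambda>w. V w \<in> B)) \<omega>"
proof -
  have E_inter_U_B: "ev M (\<lambda>w. V w \<in> E) \<inter> ev M (\<lambda>w. U w = u \<and> V w \<in> B)
      = ev M (\<lambda>w. U w = u \<and> V w \<in> E \<inter> B)"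
    and E_inter_B: "ev M (\<lambda>w. V w \<in> E) \<inter> ev M (\<lambda>w. V w \<in> B) = ev M (\<lambda>w. V w \<in> E \<inter> B)"
    by (auto simp: ev_def)
  from cond_indep_cprob_mult[OF assms(1-6), of "E \<inter> B"] cond_indep_cprob_mult[OF assms(1-6), of B]
    assms(7)
  show ?thesis
    unfolding cprob_ev_def E_inter_U_B E_inter_B by eventually_elim simp
qed

lemma cprob_ev_observed_stratum_eq_principal_stratum:
  fixes M :: "'a measure" and X :: "'a \<Rightarrow> real^'d"
    and A Med Y :: "'a \<Rightarrow> nat" and Ypot :: "nat \<Rightarrow> nat \<Rightarrow> 'a \<Rightarrow> nat" and Mpot :: "nat \<Rightarrow> 'a \<Rightarrow> nat"
    and Q :: "nat \<Rightarrow> nat \<Rightarrow> bool"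
  assumes prob: "prob_space M" and X_meas: "X \<in> borel_measurable M"
    and [measurable]: "A \<in> measurable M (count_space UNIV)"
      "\<And>a m. Ypot a m \<in> measurable M (count_space UNIV)" "\<And>a. Mpot a \<in> measurable M (count_space UNIV)"
    and binary_pot: "\<And>\<omega> a m. \<omega> \<in> space M \<Longrightarrow> a \<in> {0,1} \<Longrightarrow> m \<in> {0,1} \<Longrightarrow>
      Ypot a m \<omega> \<in> {0,1} \<and> Mpot a \<omega> \<in> {0,1}"
    and consistency_Y: "\<And>\<omega>. \<omega> \<in> space M \<Longrightarrow> A \<omega> = 1 \<Longrightarrow> Med \<omega> = 1 \<Longrightarrow> Y \<omega> = Ypot 1 1 \<omega>"
    and consistency_M: "\<And>\<omega>. \<omega> \<in> space M \<Longrightarrow> A \<omega> = 1 \<Longrightarrow> Med \<omega> = Mpot 1 \<omega>"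
    and ignorability: "cond_indep M X A
      (\<lambda>\<omega>. (Ypot 1 1 \<omega>, Ypot 1 0 \<omega>, Ypot 0 1 \<omega>, Ypot 0 0 \<omega>, Mpot 1 \<omega>, Mpot 0 \<omega>))"
    and exposure_pos: "AE \<omega> in M. cprob M X (ev M (\<lambda>w. A w = 1)) \<omega> > 0"
  shows "AE \<omega> in M.
    cprob_ev M X (ev M (\<lambda>w. Q (Ypot 1 (Mpot 0 w) w) (Ypot 0 (Mpot 0 w) w)))
      (ev M (\<lambda>w. Y w = 1 \<and> Med w = 1 \<and> A w = 1)) \<omega>
    = cprob_ev M X (ev M (\<lambda>w. Q (Ypot 1 (Mpot 0 w) w) (Ypot 0 (Mpot 0 w) w)))
      (ev M (\<lambda>w. Ypot 1 (Mpot 1 w) w = 1 \<and> Mpot 1 w = 1)) \<omega>"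
proof -
  define V where "V \<omega> = (Ypot 1 1 \<omega>, Ypot 1 0 \<omega>, Ypot 0 1 \<omega>, Ypot 0 0 \<omega>, Mpot 1 \<omega>, Mpot 0 \<omega>)" for \<omega>
  define E :: "(nat \<times> nat \<times> nat \<times> nat \<times> nat \<times> nat) set" where
    "E = {(y11, y10, y01, y00, m1, m0). Q (if m0 = 0 then y10 else y11) (if m0 = 0 then y00 else y01)}"
  define B :: "(nat \<times> nat \<times> nat \<times> nat \<times> nat \<times> nat) set" where
    "B = {(y11, y10, y01, y00, m1, m0). y11 = 1 \<and> m1 = 1}"
  have "V \<omega> \<in> {0,1} \<times> {0,1} \<times> {0,1} \<times> {0,1} \<times> {0,1} \<times> {0,1}" if "\<omega> \<in> space M" for \<omega>
    using binary_pot[OF that, of 1 1] binary_pot[OF that, of 1 0]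
      binary_pot[OF that, of 0 1] binary_pot[OF that, of 0 0]
    unfolding V_def mem_Times_iff fst_conv snd_conv by blast
  then have "V ` space M \<subseteq> {0,1} \<times> {0,1} \<times> {0,1} \<times> {0,1} \<times> {0,1} \<times> {0,1}"
    by blast
  then have finite_values: "finite (V ` space M)"
    by (rule finite_subset) simp
  have V_events: "ev M (\<lambda>w. A w = 1 \<and> V w = v) \<in> sets M" "ev M (\<lambda>w. V w = v) \<in> sets M" for v
    unfolding ev_def V_def by (cases v; simp)+
  note cancel = cprob_ev_cond_indep_cancel[OF prob X_meas ignorability[folded V_def]
      finite_values V_events exposure_pos]
  have "ev M (\<lambda>w. Q (Ypot 1 (Mpot 0 w) w) (Ypot 0 (Mpot 0 w) w)) = ev M (\<lambda>w. V w \<in> E)"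
    using binary_pot[of _ 0 0] by (fastforce simp: ev_def V_def E_def)
  moreover have "ev M (\<lambda>w. Y w = 1 \<and> Med w = 1 \<and> A w = 1) = ev M (\<lambda>w. A w = 1 \<and> V w \<in> B)"
    using consistency_Y consistency_M by (auto simp: ev_def V_def B_def)
  moreover have "ev M (\<lambda>w. Ypot 1 (Mpot 1 w) w = 1 \<and> Mpot 1 w = 1) = ev M (\<lambda>w. V w \<in> B)"
    by (auto simp: ev_def V_def B_def)
  ultimately show ?thesis
    using cancel by simp
qed

theorem mainTheorem5:
  fixes M :: "'a measure"
    and X :: "'a \<Rightarrow> real^'d"
    and A Med Y :: "'a \<Rightarrow> nat"
    and Ypot :: "nat \<Rightarrow> nat \<Rightarrow> 'a \<Rightarrow> nat"  \<comment> \<open>Ypot a m = Y(a,m)\<close>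
    and Mpot :: "nat \<Rightarrow> 'a \<Rightarrow> nat"          \<comment> \<open>Mpot a = M(a)\<close>
  assumes prob: "prob_space M"
    and X_meas: "X \<in> borel_measurable M"
    and A_meas: "A \<in> measurable M (count_space UNIV)"
    and Med_meas: "Med \<in> measurable M (count_space UNIV)"
    and Y_meas: "Y \<in> measurable M (count_space UNIV)"
    and Ypot_meas: "\<And>a m. Ypot a m \<in> measurable M (count_space UNIV)"
    and Mpot_meas: "\<And>a. Mpot a \<in> measurable M (count_space UNIV)"
    and binary: "\<And>\<omega>. \<omega> \<in> space M \<Longrightarrow> A \<omega> \<in> {0,1} \<and> Med \<omega> \<in> {0,1} \<and> Y \<omega> \<in> {0,1}"
    and binary_pot: "\<And>\<omega> a m. \<omega> \<in> space M \<Longrightarrow> a \<in> {0,1} \<Longrightarrow> m \<in> {0,1} \<Longrightarrow>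
                        Ypot a m \<omega> \<in> {0,1} \<and> Mpot a \<omega> \<in> {0,1}"
    \<comment> \<open>(A1) consistency\<close>
    and A1_Y: "\<And>\<omega> a m. \<omega> \<in> space M \<Longrightarrow> a \<in> {0,1} \<Longrightarrow> m \<in> {0,1} \<Longrightarrow>
                  A \<omega> = a \<Longrightarrow> Med \<omega> = m \<Longrightarrow> Y \<omega> = Ypot a m \<omega>"
    and A1_M: "\<And>\<omega> a. \<omega> \<in> space M \<Longrightarrow> a \<in> {0,1} \<Longrightarrow> A \<omega> = a \<Longrightarrow> Med \<omega> = Mpot a \<omega>"
    \<comment> \<open>(A2) monotonicity\<close>
    and A2: "\<And>\<omega>. \<omega> \<in> space M \<Longrightarrow>
                Ypot 1 1 \<omega> \<ge> Ypot 1 0 \<omega> \<and> Ypot 1 0 \<omega> \<ge> Ypot 0 0 \<omega> \<and>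
                Ypot 1 1 \<omega> \<ge> Ypot 0 1 \<omega> \<and> Mpot 1 \<omega> \<ge> Mpot 0 \<omega>"
    \<comment> \<open>(A3) exposure ignorability\<close>
    and A3: "cond_indep M X A
               (\<lambda>\<omega>. (Ypot 1 1 \<omega>, Ypot 1 0 \<omega>, Ypot 0 1 \<omega>, Ypot 0 0 \<omega>, Mpot 1 \<omega>, Mpot 0 \<omega>))"
    \<comment> \<open>(A4) cross-world independence of outcomes and mediators\<close>
    and A4: "cond_indep M X
               (\<lambda>\<omega>. (Ypot 1 1 \<omega>, Ypot 1 0 \<omega>, Ypot 0 1 \<omega>, Ypot 0 0 \<omega>))
               (\<lambda>\<omega>. (Mpot 1 \<omega>, Mpot 0 \<omega>))"
    \<comment> \<open>(A5), (A6) positivity\<close>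
    and eps_pos: "(\<epsilon>::real) > 0"
    and A5: "AE \<omega> in M. \<forall>a\<in>{0,1}. \<forall>m\<in>{0,1}.
               cprob M X (ev M (\<lambda>w. A w = a \<and> Med w = m)) \<omega> \<ge> \<epsilon>"
    and A6: "AE \<omega> in M.
               cprob_ev M X (ev M (\<lambda>w. Y w = 1)) (ev M (\<lambda>w. A w = 1 \<and> Med w = 1)) \<omega> \<ge> \<epsilon>"
  shows
    "(AE \<omega> in M.
       cprob_ev M X (ev M (\<lambda>w. Ypot 0 (Mpot 0 w) w = 0))
                    (ev M (\<lambda>w. Y w = 1 \<and> Med w = 1 \<and> A w = 1)) \<omega>
     = cprob_ev M X (ev M (\<lambda>w. Ypot 0 (Mpot 0 w) w = 0))
                    (ev M (\<lambda>w. Ypot 1 (Mpot 1 w) w = 1 \<and> Mpot 1 w = 1)) \<omega>)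
   \<and> (AE \<omega> in M.
       cprob_ev M X (ev M (\<lambda>w. Ypot 1 (Mpot 0 w) w = 0 \<and> Ypot 0 (Mpot 0 w) w = 0))
                    (ev M (\<lambda>w. Y w = 1 \<and> Med w = 1 \<and> A w = 1)) \<omega>
     = cprob_ev M X (ev M (\<lambda>w. Ypot 1 (Mpot 0 w) w = 0 \<and> Ypot 0 (Mpot 0 w) w = 0))
                    (ev M (\<lambda>w. Ypot 1 (Mpot 1 w) w = 1 \<and> Mpot 1 w = 1)) \<omega>)
   \<and> (AE \<omega> in M.
       cprob_ev M X (ev M (\<lambda>w. Ypot 1 (Mpot 0 w) w = 1 \<and> Ypot 0 (Mpot 0 w) w = 0))
                    (ev M (\<lambda>w. Y w = 1 \<and> Med w = 1 \<and> A w = 1)) \<omega>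
     = cprob_ev M X (ev M (\<lambda>w. Ypot 1 (Mpot 0 w) w = 1 \<and> Ypot 0 (Mpot 0 w) w = 0))
                    (ev M (\<lambda>w. Ypot 1 (Mpot 1 w) w = 1 \<and> Mpot 1 w = 1)) \<omega>)"
proof -
  note [measurable] = A_meas Med_meas
  have "AE \<omega> in M. cprob M X (ev M (\<lambda>w. A w = 1 \<and> Med w = 1)) \<omega> \<le> cprob M X (ev M (\<lambda>w. A w = 1)) \<omega>"
    by (intro cprob_mono[OF prob X_meas]) (auto simp: ev_def)
  with A5 have exposure_pos: "AE \<omega> in M. cprob M X (ev M (\<lambda>w. A w = 1)) \<omega> > 0"
    by eventually_elim (use eps_pos in force)
  have "\<And>\<omega>. \<omega> \<in> space M \<Longrightarrow> A \<omega> = 1 \<Longrightarrow> Med \<omega> = 1 \<Longrightarrow> Y \<omega> = Ypot 1 1 \<omega>"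
    and "\<And>\<omega>. \<omega> \<in> space M \<Longrightarrow> A \<omega> = 1 \<Longrightarrow> Med \<omega> = Mpot 1 \<omega>"
    using A1_Y[of _ 1 1] A1_M[of _ 1] by simp_all
  note stratum = cprob_ev_observed_stratum_eq_principal_stratum[OF prob X_meas A_meas Ypot_meas Mpot_meas
      binary_pot this A3 exposure_pos]
  show ?thesis
    using stratum[of "\<lambda>_ y0. y0 = 0"] stratum[of "\<lambda>y1 y0. y1 = 0 \<and> y0 = 0"]
      stratum[of "\<lambda>y1 y0. y1 = 1 \<and> y0 = 0"]
    by blast
qed

end
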